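(* Let $X$ be a Banach space and let $h$ be a metric functional of $X$ (with base point $0$). Then there is a continuous linear functional $f$ on $X$ of norm at most $1$ such that $f(x)\leq h(x)$ for all $x\in X$.
   Context: For $y\in X$ let $h_y(x)=\|x-y\|-\|y\|$. Endow $\mathbb{R}^X$ with the topology of pointwise convergence. A metric functional of $X$ is an element of the closure of $\{h_y: y\in X\}$ in $\mathbb{R}^X$. *)

theory Defs
  imports "HOL-Analysis.Analysis"
begin

definition hfun :: "'a::real_normed_vector \<Rightarrow> 'a \<Rightarrow> real" where
  "hfun y = (\<lambda>x. norm (x - y) - norm y)"

text \<open>Metric functionals: closure of the h_y in the pointwise-convergence
  (product) topology on 'a \<Rightarrow> real, which is the library's topology on functions.\<close>
definition metric_functional :: "('a::real_normed_vector \<Rightarrow> real) \<Rightarrow> bool" where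
  "metric_functional h \<longleftrightarrow> h \<in> closure (range hfun)"

end

theory Submission
  imports Defs
begin

text \<open>Each \<open>h\<^sub>y\<close> is convex, satisfies \<open>h\<^sub>y(0) = 0\<close> and \<open>h\<^sub>y(x) \<le> \<parallel>x\<parallel>\<close>; all three
  properties are closed conditions for pointwise convergence, so every metric functional \<open>h\<close>
  inherits them. A Hahn--Banach argument (Zorn's lemma over linear functionals on subspaces
  dominated by \<open>h\<close>, extended one dimension at a time using convexity) yields a linear \<open>f \<le> h\<close>.
  Then \<open>\<plusminus>f(x) = f(\<plusminus>x) \<le> \<parallel>x\<parallel>\<close>, so \<open>f\<close> is bounded with norm at most 1.\<close>

text \<open>A linear functional on a subspace, dominated by \<open>h\<close>, is encoded by its graph \<open>G\<close>;
  its domain is \<open>fst ` G\<close>.\<close>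
definition dominated_linear_graph :: "('a::real_vector \<Rightarrow> real) \<Rightarrow> ('a \<times> real) set \<Rightarrow> bool" where
  "dominated_linear_graph h G \<longleftrightarrow>
     (\<forall>x a b. (x, a) \<in> G \<longrightarrow> (x, b) \<in> G \<longrightarrow> a = b) \<and>
     (\<forall>x a y b c. (x, a) \<in> G \<longrightarrow> (y, b) \<in> G \<longrightarrow> (c *\<^sub>R x + y, c * a + b) \<in> G) \<and>
     (\<forall>x a. (x, a) \<in> G \<longrightarrow> a \<le> h x)"

lemma
  assumes "dominated_linear_graph h G"
  shows dominated_linear_graph_unique: "(x, a) \<in> G \<Longrightarrow> (x, b) \<in> G \<Longrightarrow> a = b"
    and dominated_linear_graph_lincomb: "(x, a) \<in> G \<Longrightarrow> (y, b) \<in> G \<Longrightarrow> (c *\<^sub>R x + y, c * a + b) \<in> G"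
    and dominated_linear_graph_le: "(x, a) \<in> G \<Longrightarrow> a \<le> h x"
  using assms unfolding dominated_linear_graph_def by blast+

lemma dominated_linear_graph_zero:
  assumes "dominated_linear_graph h G" and "(x, a) \<in> G"
  shows "(0, 0) \<in> G"
  using dominated_linear_graph_lincomb[OF assms(1,2,2), of "-1"] by simp

lemma dominated_linear_graph_scaleR:
  assumes "dominated_linear_graph h G" and "(x, a) \<in> G"
  shows "(c *\<^sub>R x, c * a) \<in> G"
  using dominated_linear_graph_lincomb[OF assms(1,2) dominated_linear_graph_zero[OF assms]] by simp

text \<open>Convexity of \<open>h\<close> separates the slopes to the left of the domain from those to the right.\<close>
lemma dominated_linear_graph_slopes:
  assumes h: "convex_on UNIV h" and G: "dominated_linear_graph h G"
    and "(m', a') \<in> G" "(m, a) \<in> G" "s > 0" "t > 0"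
  shows "t * a' + s * a \<le> t * h (m' - s *\<^sub>R z) + s * h (m + t *\<^sub>R z)"
proof -
  define u where "u = s / (s + t)"
  have u: "0 \<le> u" "u \<le> 1" and weights: "(s + t) * (1 - u) = t" "(s + t) * u = s"
    using assms(5,6) by (auto simp: u_def field_simps)
  have "u * t = (1 - u) * s"
    using weights by (metis mult.assoc mult.commute)
  moreover have "(1 - u) *\<^sub>R (m' - s *\<^sub>R z) + u *\<^sub>R (m + t *\<^sub>R z)
      = (1 - u) *\<^sub>R m' + u *\<^sub>R m + (u * t - (1 - u) * s) *\<^sub>R z"
    by (simp add: algebra_simps)
  ultimately have mid: "(1 - u) *\<^sub>R (m' - s *\<^sub>R z) + u *\<^sub>R (m + t *\<^sub>R z) = (1 - u) *\<^sub>R m' + u *\<^sub>R m"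
    by simp
  have "(1 - u) * a' + u * a \<le> h ((1 - u) *\<^sub>R m' + u *\<^sub>R m)"
    using assms(3,4)
    by (intro dominated_linear_graph_le[OF G] dominated_linear_graph_lincomb[OF G]
        dominated_linear_graph_scaleR[OF G])
  also have "\<dots> \<le> (1 - u) * h (m' - s *\<^sub>R z) + u * h (m + t *\<^sub>R z)"
    using convex_onD[OF h u(1,2)] mid by (metis UNIV_I)
  finally have "(s + t) * ((1 - u) * a' + u * a)
      \<le> (s + t) * ((1 - u) * h (m' - s *\<^sub>R z) + u * h (m + t *\<^sub>R z))"
    using assms(5,6) by simp
  then show ?thesis
    by (simp only: distrib_left mult.assoc[symmetric] weights)
qed

lemma dominated_linear_graph_extension_slope:
  assumes h: "convex_on UNIV h" and G: "dominated_linear_graph h G" and "G \<noteq> {}"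
  shows "\<exists>c. \<forall>m a t. (m, a) \<in> G \<longrightarrow> a + t * c \<le> h (m + t *\<^sub>R z)"
proof -
  define S where "S = {(a - h (m - s *\<^sub>R z)) / s | m a s. (m, a) \<in> G \<and> s > 0}"
  have S_le: "p \<le> (h (m + t *\<^sub>R z) - a) / t" if "p \<in> S" "(m, a) \<in> G" "t > 0" for p m a t
  proof -
    obtain m' a' s where p: "p = (a' - h (m' - s *\<^sub>R z)) / s" "(m', a') \<in> G" "s > 0"
      using \<open>p \<in> S\<close> unfolding S_def by blast
    have "t * a' + s * a \<le> t * h (m' - s *\<^sub>R z) + s * h (m + t *\<^sub>R z)"
      using dominated_linear_graph_slopes[OF h G p(2) that(2) p(3) that(3)] .
    with p(3) that(3) show ?thesis
      unfolding p(1) by (simp add: field_simps)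
  qed
  obtain m0 a0 where "(m0, a0) \<in> G"
    using \<open>G \<noteq> {}\<close> by auto
  then have "(a0 - h (m0 - 1 *\<^sub>R z)) / 1 \<in> S"
    unfolding S_def by (intro CollectI exI[of _ m0] exI[of _ a0] exI[of _ "1::real"]) simp
  then have "S \<noteq> {}" by blast
  have "bdd_above S"
    using S_le[OF _ \<open>(m0, a0) \<in> G\<close> zero_less_one] unfolding bdd_above_def by blast
  have "a + t * Sup S \<le> h (m + t *\<^sub>R z)" if "(m, a) \<in> G" for m a t
  proof (cases t "0::real" rule: linorder_cases)
    case less
    have "(a - h (m - (- t) *\<^sub>R z)) / (- t) \<in> S"
      unfolding S_def using that less by (intro CollectI exI[of _ m] exI[of _ a] exI[of _ "- t"]) simp
    then have "(a - h (m - (- t) *\<^sub>R z)) / (- t) \<le> Sup S"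
      using \<open>bdd_above S\<close> by (rule cSup_upper)
    with less show ?thesis by (simp add: field_simps)
  next
    case equal
    then show ?thesis using dominated_linear_graph_le[OF G that] by simp
  next
    case greater
    have "Sup S \<le> (h (m + t *\<^sub>R z) - a) / t"
      using \<open>S \<noteq> {}\<close> S_le[OF _ that greater] by (rule cSup_least)
    with greater show ?thesis by (simp add: field_simps)
  qed
  then show ?thesis by blast
qed

lemma dominated_linear_graph_extend:
  assumes G: "dominated_linear_graph h G" and z: "z \<notin> fst ` G"
    and c: "\<And>m a t. (m, a) \<in> G \<Longrightarrow> a + t * c \<le> h (m + t *\<^sub>R z)"
  shows "dominated_linear_graph h {(m + t *\<^sub>R z, a + t * c) | m a t. (m, a) \<in> G}"
  unfolding dominated_linear_graph_def
proof (intro conjI allI impI)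
  fix x a b
  assume "(x, a) \<in> {(m + t *\<^sub>R z, a + t * c) | m a t. (m, a) \<in> G}"
    and "(x, b) \<in> {(m + t *\<^sub>R z, a + t * c) | m a t. (m, a) \<in> G}"
  then obtain m1 a1 t1 m2 a2 t2 where
    1: "(m1, a1) \<in> G" "x = m1 + t1 *\<^sub>R z" "a = a1 + t1 * c" and
    2: "(m2, a2) \<in> G" "x = m2 + t2 *\<^sub>R z" "b = a2 + t2 * c"
    by blast
  have "t1 = t2"
  proof (rule ccontr)
    assume "t1 \<noteq> t2"
    have "(t1 - t2) *\<^sub>R z = m2 - m1"
      using 1(2) 2(2) by (simp add: algebra_simps)
    then have "inverse (t1 - t2) *\<^sub>R ((t1 - t2) *\<^sub>R z) = inverse (t1 - t2) *\<^sub>R (m2 - m1)"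
      by simp
    with \<open>t1 \<noteq> t2\<close> have "z = inverse (t1 - t2) *\<^sub>R (m2 - m1)"
      by simp
    also have "\<dots> = (- inverse (t1 - t2)) *\<^sub>R m1 + inverse (t1 - t2) *\<^sub>R m2"
      by (simp add: scaleR_right_diff_distrib)
    finally have "z = \<dots>" .
    moreover have "((- inverse (t1 - t2)) *\<^sub>R m1 + inverse (t1 - t2) *\<^sub>R m2,
        (- inverse (t1 - t2)) * a1 + inverse (t1 - t2) * a2) \<in> G"
      by (intro dominated_linear_graph_lincomb[OF G] dominated_linear_graph_scaleR[OF G] 1(1) 2(1))
    ultimately show False
      using z by (metis fst_conv image_eqI)
  qed
  with 1 2 have "a1 = a2"
    using dominated_linear_graph_unique[OF G] by auto
  with 1 2 \<open>t1 = t2\<close> show "a = b" by simp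
next
  fix x a y b d
  assume "(x, a) \<in> {(m + t *\<^sub>R z, a + t * c) | m a t. (m, a) \<in> G}"
    and "(y, b) \<in> {(m + t *\<^sub>R z, a + t * c) | m a t. (m, a) \<in> G}"
  then obtain m1 a1 t1 m2 a2 t2 where
    1: "(m1, a1) \<in> G" "x = m1 + t1 *\<^sub>R z" "a = a1 + t1 * c" and
    2: "(m2, a2) \<in> G" "y = m2 + t2 *\<^sub>R z" "b = a2 + t2 * c"
    by blast
  have "(d *\<^sub>R m1 + m2, d * a1 + a2) \<in> G"
    using dominated_linear_graph_lincomb[OF G 1(1) 2(1)] .
  moreover have "d *\<^sub>R x + y = (d *\<^sub>R m1 + m2) + (d * t1 + t2) *\<^sub>R z"
    and "d * a + b = (d * a1 + a2) + (d * t1 + t2) * c"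
    using 1 2 by (simp_all add: algebra_simps)
  ultimately show "(d *\<^sub>R x + y, d * a + b) \<in> {(m + t *\<^sub>R z, a + t * c) | m a t. (m, a) \<in> G}"
    by blast
next
  fix x a
  assume "(x, a) \<in> {(m + t *\<^sub>R z, a + t * c) | m a t. (m, a) \<in> G}"
  then show "a \<le> h x" using c by blast
qed

lemma dominated_linear_graph_maximal_total:
  assumes h: "convex_on UNIV h" and G: "dominated_linear_graph h G" and "G \<noteq> {}"
    and maximal: "\<And>G'. dominated_linear_graph h G' \<Longrightarrow> G \<subseteq> G' \<Longrightarrow> G' = G"
  shows "fst ` G = UNIV"
proof (rule ccontr)
  assume "fst ` G \<noteq> UNIV"
  then obtain z where z: "z \<notin> fst ` G" by blast
  obtain c where c: "\<And>m a t. (m, a) \<in> G \<Longrightarrow> a + t * c \<le> h (m + t *\<^sub>R z)"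
    using dominated_linear_graph_extension_slope[OF h G \<open>G \<noteq> {}\<close>] by blast
  define G' where "G' = {(m + t *\<^sub>R z, a + t * c) | m a t. (m, a) \<in> G}"
  have "dominated_linear_graph h G'"
    unfolding G'_def using G z c by (rule dominated_linear_graph_extend)
  moreover have "G \<subseteq> G'"
    unfolding G'_def by force
  moreover obtain m0 a0 where "(m0, a0) \<in> G"
    using \<open>G \<noteq> {}\<close> by auto
  then have "(z, c) \<in> G'"
    unfolding G'_def using dominated_linear_graph_zero[OF G]
    by (intro CollectI exI[of _ 0] exI[of _ "0::real"] exI[of _ "1::real"]) auto
  ultimately show False
    using maximal z by (metis fst_conv image_eqI)
qed

lemma dominated_linear_graph_Union_chain:
  assumes "C \<in> chains {G. dominated_linear_graph h G}"
  shows "dominated_linear_graph h (\<Union>C)"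
proof -
  have graph: "dominated_linear_graph h G" if "G \<in> C" for G
    using assms that unfolding chains_def by auto
  have common: "\<exists>G\<in>C. p \<in> G \<and> q \<in> G" if "p \<in> \<Union>C" "q \<in> \<Union>C" for p q
    using assms that unfolding chains_def chain_subset_def by blast
  show ?thesis
    unfolding dominated_linear_graph_def
  proof (intro conjI allI impI)
    fix x a b assume "(x, a) \<in> \<Union>C" "(x, b) \<in> \<Union>C"
    then show "a = b"
      using common graph dominated_linear_graph_unique by metis
  next
    fix x a y b c assume "(x, a) \<in> \<Union>C" "(y, b) \<in> \<Union>C"
    then show "(c *\<^sub>R x + y, c * a + b) \<in> \<Union>C"
      using common graph dominated_linear_graph_lincomb by (metis UnionI)
  next
    fix x a assume "(x, a) \<in> \<Union>C"
    then show "a \<le> h x"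
      using graph dominated_linear_graph_le by blast
  qed
qed

lemma dominated_linear_graph_total_linear:
  assumes G: "dominated_linear_graph h G" and total: "fst ` G = UNIV"
  shows "\<exists>f. linear f \<and> (\<forall>x. f x \<le> h x)"
proof -
  define f where "f x = (SOME a. (x, a) \<in> G)" for x
  have in_G: "(x, f x) \<in> G" for x
  proof -
    have "x \<in> fst ` G"
      using total by simp
    then obtain a where "(x, a) \<in> G"
      by force
    then show ?thesis
      unfolding f_def by (rule someI)
  qed
  have f_eq: "f x = a" if "(x, a) \<in> G" for x a
    using dominated_linear_graph_unique[OF G in_G that] .
  have "linear f"
  proof
    show "f (x + y) = f x + f y" for x y
      using f_eq[OF dominated_linear_graph_lincomb[OF G in_G in_G, of 1]] by simp
    show "f (c *\<^sub>R x) = c *\<^sub>R f x" for c x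
      using f_eq[OF dominated_linear_graph_scaleR[OF G in_G]] by simp
  qed
  moreover have "f x \<le> h x" for x
    using dominated_linear_graph_le[OF G in_G] .
  ultimately show ?thesis by blast
qed

theorem convex_on_dominates_linear:
  fixes h :: "'a::real_vector \<Rightarrow> real"
  assumes h: "convex_on UNIV h" and "0 \<le> h 0"
  shows "\<exists>f. linear f \<and> (\<forall>x. f x \<le> h x)"
proof -
  obtain M where M: "dominated_linear_graph h M"
    and maximal: "\<And>G. dominated_linear_graph h G \<Longrightarrow> M \<subseteq> G \<Longrightarrow> G = M"
    using Zorn_Lemma[of "{G. dominated_linear_graph h G}"] dominated_linear_graph_Union_chain
    by auto
  have "dominated_linear_graph h {(0, 0)}"
    using \<open>0 \<le> h 0\<close> by (simp add: dominated_linear_graph_def)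
  then have "M \<noteq> {}"
    using maximal by blast
  then have "fst ` M = UNIV"
    using dominated_linear_graph_maximal_total[OF h M _ maximal] by blast
  with M show ?thesis
    by (rule dominated_linear_graph_total_linear)
qed

lemma closed_convex_on_functions:
  "closed {f :: 'a::real_vector \<Rightarrow> real. convex_on UNIV f}"
proof -
  have "{f :: 'a \<Rightarrow> real. convex_on UNIV f} =
      (\<Inter>(x, y, u) \<in> UNIV \<times> UNIV \<times> {0..1}.
        {f. f (u *\<^sub>R x + (1 - u) *\<^sub>R y) \<le> u * f x + (1 - u) * f y})"
    by (auto simp: convex_on_alt)
  also have "closed \<dots>"
    by (intro closed_INT ballI, clarify, intro closed_Collect_le continuous_intros) auto
  finally show ?thesis .
qed

lemma metric_functional_closed_property:
  assumes "metric_functional h" and "closed {g. P g}" and "\<And>y. P (hfun y)"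
  shows "P h"
proof -
  have "closure (range hfun) \<subseteq> {g. P g}"
    using assms(2,3) by (intro closure_minimal) auto
  with assms(1) show ?thesis
    unfolding metric_functional_def by auto
qed

lemma convex_on_hfun: "convex_on UNIV (hfun y)"
proof -
  have "convex_on UNIV (\<lambda>x. dist y x - norm y)"
    by (intro convex_on_diff convex_on_dist) (simp_all add: concave_on_const)
  then show ?thesis
    by (simp add: hfun_def dist_norm norm_minus_commute)
qed

lemma metric_functional_convex:
  assumes "metric_functional h" shows "convex_on UNIV h"
  using metric_functional_closed_property[OF assms closed_convex_on_functions] convex_on_hfun
  by blast

lemma metric_functional_le_norm:
  assumes "metric_functional h" shows "h x \<le> norm x"
proof (rule metric_functional_closed_property[where P = "\<lambda>g. g x \<le> norm x", OF assms])
  show "closed {g :: 'a \<Rightarrow> real. g x \<le> norm x}"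
    by (intro closed_Collect_le continuous_intros) simp
  show "hfun y x \<le> norm x" for y
    unfolding hfun_def using norm_triangle_ineq4[of x y] by simp
qed

lemma metric_functional_zero:
  assumes "metric_functional h" shows "h 0 = 0"
  by (rule metric_functional_closed_property[where P = "\<lambda>g. g 0 = 0", OF assms])
    (simp_all add: hfun_def closed_Collect_eq continuous_on_const continuous_on_component)

theorem lemma3p1:
  fixes h :: "'a::banach \<Rightarrow> real"
  assumes "metric_functional h"
  shows "\<exists>f. bounded_linear f \<and> onorm f \<le> 1 \<and> (\<forall>x. f x \<le> h x)"
proof -
  obtain f where f: "linear f" and le_h: "\<And>x. f x \<le> h x"
    using convex_on_dominates_linear[OF metric_functional_convex[OF assms]]
      metric_functional_zero[OF assms] by auto
  have bound: "norm (f x) \<le> norm x" for x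
  proof -
    have "f x \<le> norm x" and "- f x \<le> norm x"
      using le_h[of x] le_h[of "- x"] metric_functional_le_norm[OF assms, of x]
        metric_functional_le_norm[OF assms, of "- x"] linear_neg[OF f, of x] by simp_all
    then show ?thesis by simp
  qed
  have "bounded_linear f"
    using linear_add[OF f] linear_scale[OF f] bound by (intro bounded_linear_intro[of f 1]) auto
  moreover have "onorm f \<le> 1"
    using bound by (intro onorm_bound) simp_all
  ultimately show ?thesis
    using le_h by blast
qed

end
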